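(* Let $A\in\mathbb{R}^{d\times d}$ be invertible, $\bm{b}\in\mathbb{R}^d$, $\bm{x}_0\in\mathbb{R}^d$, $\Sigma_0$ symmetric positive-definite, and write $\langle\bm{u},\bm{v}\rangle_{A\Sigma_0A^\top}=\bm{u}^\top A\Sigma_0A^\top\bm{v}$ with associated norm $\|\cdot\|_{A\Sigma_0A^\top}$. Define recursively: $\bm{r}_0=\bm{b}-A\bm{x}_0$, $\tilde{\bm{s}}_1=\bm{r}_0$, $\bm{s}_1=\tilde{\bm{s}}_1/\|\tilde{\bm{s}}_1\|_{A\Sigma_0A^\top}$; for $k\ge1$, with $S_k=[\bm{s}_1,\dots,\bm{s}_k]$ and $\Lambda_k=S_k^\top A\Sigma_0A^\top S_k$, set $\bm{x}_k=\bm{x}_0+\Sigma_0A^\top S_k\Lambda_k^{-1}S_k^\top\bm{r}_0$, $\bm{r}_k=\bm{b}-A\bm{x}_k$, $\tilde{\bm{s}}_{k+1}=\bm{r}_k-\langle\bm{s}_k,\bm{r}_k\rangle_{A\Sigma_0A^\top}\bm{s}_k$, and, assuming $\tilde{\bm{s}}_{k+1}\neq\bm{0}$, $\bm{s}_{k+1}=\tilde{\bm{s}}_{k+1}/\|\tilde{\bm{s}}_{k+1}\|_{A\Sigma_0A^\top}$. Then for each $m$ such that $\tilde{\bm{s}}_1,\dots,\tilde{\bm{s}}_m\neq\bm{0}$, the set $\{\bm{s}_i\}_{i=1}^m$ is $A\Sigma_0A^\top$-orthonormal, and consequently $\Lambda_m=I$ (so in particular the recursion is well defined).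
   Context: $\bm{x}_k$ is the posterior mean of $\bm{x}$ under the prior $\mathcal{N}(\bm{x}_0,\Sigma_0)$ conditioned on $S_k^\top A\bm{x}=S_k^\top\bm{b}$. A set $\{\bm{s}_i\}$ is $A\Sigma_0A^\top$-orthonormal if $\langle\bm{s}_i,\bm{s}_j\rangle_{A\Sigma_0A^\top}=\delta_{ij}$. *)

theory Defs
  imports "Jordan_Normal_Form.Determinant"
begin

(* Matrix inverse (the genuine inverse whenever det M \<noteq> 0) *)
definition minv :: "real mat \<Rightarrow> real mat" where
  "minv M = (1 / det M) \<cdot>\<^sub>m adj_mat M"

definition wmat :: "real mat \<Rightarrow> real mat \<Rightarrow> real mat" where
  "wmat A Sig = A * Sig * A\<^sup>T"

definition ipW :: "real mat \<Rightarrow> real vec \<Rightarrow> real vec \<Rightarrow> real" where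
  "ipW W u v = u \<bullet> (W *\<^sub>v v)"

definition normW :: "real mat \<Rightarrow> real vec \<Rightarrow> real" where
  "normW W v = sqrt (ipW W v v)"

definition sym_pos_def :: "nat \<Rightarrow> real mat \<Rightarrow> bool" where
  "sym_pos_def d S \<longleftrightarrow> S \<in> carrier_mat d d \<and> S\<^sup>T = S \<and>
     (\<forall>v \<in> carrier_vec d. v \<noteq> 0\<^sub>v d \<longrightarrow> v \<bullet> (S *\<^sub>v v) > 0)"

definition Smat :: "nat \<Rightarrow> real vec list \<Rightarrow> real mat" where
  "Smat d ss = mat_of_cols d ss"

definition Lambda :: "nat \<Rightarrow> real mat \<Rightarrow> real mat \<Rightarrow> real vec list \<Rightarrow> real mat" where
  "Lambda d A Sig ss = (Smat d ss)\<^sup>T * wmat A Sig * Smat d ss"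

definition xk :: "nat \<Rightarrow> real mat \<Rightarrow> real mat \<Rightarrow> real vec \<Rightarrow> real vec \<Rightarrow> real vec list \<Rightarrow> real vec" where
  "xk d A Sig b x0 ss =
     x0 + (Sig * A\<^sup>T * Smat d ss * minv (Lambda d A Sig ss) * (Smat d ss)\<^sup>T) *\<^sub>v (b - A *\<^sub>v x0)"

definition next_stilde :: "nat \<Rightarrow> real mat \<Rightarrow> real mat \<Rightarrow> real vec \<Rightarrow> real vec \<Rightarrow> real vec list \<Rightarrow> real vec" where
  "next_stilde d A Sig b x0 ss =
     (let r = b - A *\<^sub>v xk d A Sig b x0 ss; s = last ss
      in r - ipW (wmat A Sig) s r \<cdot>\<^sub>v s)"

definition normalizeW :: "real mat \<Rightarrow> real vec \<Rightarrow> real vec" where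
  "normalizeW W v = (1 / normW W v) \<cdot>\<^sub>v v"

(* svecs k = [s_1, ..., s_k] *)
fun svecs :: "nat \<Rightarrow> real mat \<Rightarrow> real mat \<Rightarrow> real vec \<Rightarrow> real vec \<Rightarrow> nat \<Rightarrow> real vec list" where
  "svecs d A Sig b x0 0 = []"
| "svecs d A Sig b x0 (Suc k) =
     (if k = 0 then [normalizeW (wmat A Sig) (b - A *\<^sub>v x0)]
      else svecs d A Sig b x0 k @
           [normalizeW (wmat A Sig) (next_stilde d A Sig b x0 (svecs d A Sig b x0 k))])"

fun stilde :: "nat \<Rightarrow> real mat \<Rightarrow> real mat \<Rightarrow> real vec \<Rightarrow> real vec \<Rightarrow> nat \<Rightarrow> real vec" where
  "stilde d A Sig b x0 0 = undefined"
| "stilde d A Sig b x0 (Suc 0) = b - A *\<^sub>v x0"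
| "stilde d A Sig b x0 (Suc (Suc k)) = next_stilde d A Sig b x0 (svecs d A Sig b x0 (Suc k))"

definition svec :: "nat \<Rightarrow> real mat \<Rightarrow> real mat \<Rightarrow> real vec \<Rightarrow> real vec \<Rightarrow> nat \<Rightarrow> real vec" where
  "svec d A Sig b x0 k = last (svecs d A Sig b x0 k)"

end

theory Submission
  imports Defs
begin

(* Write W = A Sig0 A^T, which is symmetric positive definite. While s_1, ..., s_k are
   W-orthonormal, Lambda_k = I and r_k = r_0 - W S_k S_k^T r_0. Hence s_i^T r_k = 0 for i <= k,
   r_(i-1) - r_i = (s_i^T r_0) W s_i, and, r_k being a combination of s_(k+1) and s_k, the
   residuals are mutually orthogonal. Also s_i^T r_0 = s_i^T r_(i-1) is a positive multiple of
   |r_(i-1)|^2, so it is nonzero, and dividing by it gives <s_i, r_k>_W = 0 for i < k. Thus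
   s~_(k+1) = r_k - <s_k, r_k>_W s_k is W-orthogonal to s_k by construction and to s_1, ...,
   s_(k-1) because r_k is; the claim follows by induction on k. *)

lemma smult_one_mat: "1 \<cdot>\<^sub>m (A :: 'a :: semiring_1 mat) = A"
  by (intro eq_matI) auto

lemma minv_one_mat: "minv (1\<^sub>m n) = (1\<^sub>m n :: real mat)"
proof -
  have "adj_mat (1\<^sub>m n) = (1\<^sub>m n :: real mat) * adj_mat (1\<^sub>m n)"
    by (metis adj_mat(1) left_mult_one_mat one_carrier_mat)
  also have "\<dots> = 1\<^sub>m n"
    using adj_mat(2)[of "1\<^sub>m n" n] by (simp add: smult_one_mat)
  finally show ?thesis by (simp add: minv_def smult_one_mat)
qed

lemma scalar_prod_self_eq_0_real:
  fixes v :: "real vec"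
  assumes "v \<in> carrier_vec n"
  shows "v \<bullet> v = 0 \<longleftrightarrow> v = 0\<^sub>v n"
  using conjugate_square_eq_0_vec[OF assms] by (simp add: scalar_prod_def)

lemma unit_vec_scalar_prod_vec:
  "unit_vec n i \<bullet> vec n f = (if i < n then f i else (0 :: 'a :: semiring_1))"
  by (simp add: unit_vec_def scalar_prod_def if_distrib[of "\<lambda>x. x * _"] sum.delta' cong: if_cong)

lemma mat_of_cols_transpose_mult_vec:
  assumes "set ss \<subseteq> carrier_vec d" and "u \<in> carrier_vec d"
  shows "(mat_of_cols d ss)\<^sup>T *\<^sub>v u = vec (length ss) (\<lambda>l. ss ! l \<bullet> u)"
  using assms by (intro eq_vecI) (auto simp: subsetD)

lemma mat_of_cols_append_mult_transpose:
  fixes ss :: "'a :: comm_ring_1 vec list"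
  assumes ss: "set ss \<subseteq> carrier_vec d" and s: "s \<in> carrier_vec d" and u: "u \<in> carrier_vec d"
  shows "mat_of_cols d (ss @ [s]) *\<^sub>v ((mat_of_cols d (ss @ [s]))\<^sup>T *\<^sub>v u)
     = mat_of_cols d ss *\<^sub>v ((mat_of_cols d ss)\<^sup>T *\<^sub>v u) + (s \<bullet> u) \<cdot>\<^sub>v s"
proof -
  have expand: "(mat_of_cols d ts *\<^sub>v ((mat_of_cols d ts)\<^sup>T *\<^sub>v u)) $ i
      = (\<Sum>l<length ts. ts ! l $ i * (ts ! l \<bullet> u))"
    if "set ts \<subseteq> carrier_vec d" "i < d" for ts i
    using that u by (auto simp: scalar_prod_def lessThan_atLeast0 mat_of_cols_index
        mat_of_cols_transpose_mult_vec intro!: sum.cong)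
  show ?thesis
  proof (rule eq_vecI)
    fix i assume "i < dim_vec (mat_of_cols d ss *\<^sub>v ((mat_of_cols d ss)\<^sup>T *\<^sub>v u) + (s \<bullet> u) \<cdot>\<^sub>v s)"
    hence i: "i < d" using s by simp
    have "(mat_of_cols d (ss @ [s]) *\<^sub>v ((mat_of_cols d (ss @ [s]))\<^sup>T *\<^sub>v u)) $ i
        = (\<Sum>l<length (ss @ [s]). (ss @ [s]) ! l $ i * ((ss @ [s]) ! l \<bullet> u))"
      using ss s i by (intro expand) auto
    also have "\<dots> = (\<Sum>l<length ss. ss ! l $ i * (ss ! l \<bullet> u)) + s $ i * (s \<bullet> u)"
      by (simp add: nth_append)
    also have "\<dots> = (mat_of_cols d ss *\<^sub>v ((mat_of_cols d ss)\<^sup>T *\<^sub>v u) + (s \<bullet> u) \<cdot>\<^sub>v s) $ i"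
      using s i by (simp add: expand[OF ss i] del: index_mult_mat_vec)
    finally show "(mat_of_cols d (ss @ [s]) *\<^sub>v ((mat_of_cols d (ss @ [s]))\<^sup>T *\<^sub>v u)) $ i
        = (mat_of_cols d ss *\<^sub>v ((mat_of_cols d ss)\<^sup>T *\<^sub>v u) + (s \<bullet> u) \<cdot>\<^sub>v s) $ i" .
  qed (use s in simp)
qed

lemma gram_mat_of_cols_index:
  assumes ss: "set ss \<subseteq> carrier_vec d" and W: "W \<in> carrier_mat d d"
    and il: "i < length ss" "l < length ss"
  shows "((mat_of_cols d ss)\<^sup>T * W * mat_of_cols d ss) $$ (i, l) = ss ! i \<bullet> (W *\<^sub>v ss ! l)"
proof -
  let ?S = "mat_of_cols d ss"
  have S: "?S \<in> carrier_mat d (length ss)" by simp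
  have "?S\<^sup>T * W * ?S = ?S\<^sup>T * (W * ?S)"
    using S W by (intro assoc_mult_mat) auto
  also have "\<dots> $$ (i, l) = row (?S\<^sup>T) i \<bullet> col (W * ?S) l"
    using S W il by simp
  also have "\<dots> = ss ! i \<bullet> (W *\<^sub>v ss ! l)"
    using W il ss by (simp add: col_mult2[OF W S] subsetD)
  finally show ?thesis .
qed

lemma gram_mat_of_cols_eq_one:
  assumes ss: "set ss \<subseteq> carrier_vec d" and W: "W \<in> carrier_mat d d"
    and orth: "\<forall>i<length ss. \<forall>l<length ss. ss ! i \<bullet> (W *\<^sub>v ss ! l) = (if i = l then 1 else 0)"
  shows "(mat_of_cols d ss)\<^sup>T * W * mat_of_cols d ss = 1\<^sub>m (length ss)"
proof (rule eq_matI)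
  fix i l assume "i < dim_row (1\<^sub>m (length ss))" "l < dim_col (1\<^sub>m (length ss))"
  then have il: "i < length ss" "l < length ss" by auto
  then show "((mat_of_cols d ss)\<^sup>T * W * mat_of_cols d ss) $$ (i, l) = 1\<^sub>m (length ss) $$ (i, l)"
    unfolding gram_mat_of_cols_index[OF ss W il] using orth by auto
qed (use W in auto)

lemma transpose_invertible_mat_mult_vec_eq_0:
  fixes A :: "'a :: comm_ring_1 mat"
  assumes A: "A \<in> carrier_mat d d" and inv: "invertible_mat A"
    and v: "v \<in> carrier_vec d" and z: "A\<^sup>T *\<^sub>v v = 0\<^sub>v d"
  shows "v = 0\<^sub>v d"
proof -
  obtain B where AB: "A * B = 1\<^sub>m d" and BA: "B * A = 1\<^sub>m (dim_row B)"
    using inv A unfolding invertible_mat_def inverts_mat_def by auto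
  have B: "B \<in> carrier_mat d d"
    using AB BA A by (metis carrier_matD(2) carrier_matI index_mult_mat(2,3) index_one_mat(2,3))
  have "v = (A * B)\<^sup>T *\<^sub>v v" using AB v by simp
  also have "\<dots> = B\<^sup>T *\<^sub>v (A\<^sup>T *\<^sub>v v)" using A B v by (simp add: transpose_mult)
  also have "\<dots> = 0\<^sub>v d" using z B by (intro eq_vecI) auto
  finally show ?thesis .
qed

lemma sym_mat_scalar_prod_swap:
  fixes W :: "'a :: comm_ring_1 mat"
  assumes W: "W \<in> carrier_mat d d" "W\<^sup>T = W" and uv: "u \<in> carrier_vec d" "v \<in> carrier_vec d"
  shows "u \<bullet> (W *\<^sub>v v) = v \<bullet> (W *\<^sub>v u)"
  using transpose_vec_mult_scalar[OF W(1) uv(2) uv(1)] comm_scalar_prod[of "W *\<^sub>v u" d v] W uv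
  by simp

lemma sym_pos_def_wmat:
  assumes A: "A \<in> carrier_mat d d" and inv: "invertible_mat A" and Sig: "sym_pos_def d Sig"
  shows "sym_pos_def d (wmat A Sig)"
proof -
  have Sc: "Sig \<in> carrier_mat d d" and ST: "Sig\<^sup>T = Sig"
    and Sp: "\<And>v. v \<in> carrier_vec d \<Longrightarrow> v \<noteq> 0\<^sub>v d \<Longrightarrow> v \<bullet> (Sig *\<^sub>v v) > 0"
    using Sig unfolding sym_pos_def_def by auto
  have "(wmat A Sig)\<^sup>T = (A\<^sup>T)\<^sup>T * (A * Sig)\<^sup>T"
    unfolding wmat_def using A Sc by (intro transpose_mult[of _ d d]) auto
  also have "\<dots> = A * (Sig * A\<^sup>T)"
    using A Sc ST by (simp add: transpose_mult[of _ d d])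
  also have "\<dots> = wmat A Sig"
    unfolding wmat_def using A Sc by (simp add: assoc_mult_mat[of _ d d _ d _ d])
  finally have "(wmat A Sig)\<^sup>T = wmat A Sig" .
  moreover have "v \<bullet> (wmat A Sig *\<^sub>v v) > 0" if v: "v \<in> carrier_vec d" "v \<noteq> 0\<^sub>v d" for v
  proof -
    have "v \<bullet> (wmat A Sig *\<^sub>v v) = (A\<^sup>T *\<^sub>v v) \<bullet> (Sig *\<^sub>v (A\<^sup>T *\<^sub>v v))"
      using A Sc v transpose_vec_mult_scalar[OF A _ v(1), of "Sig *\<^sub>v (A\<^sup>T *\<^sub>v v)"]
      by (simp add: wmat_def assoc_mult_mat_vec[of _ d d _ d])
    also have "\<dots> > 0"
      using transpose_invertible_mat_mult_vec_eq_0[OF A inv v(1)] A v by (intro Sp) auto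
    finally show ?thesis .
  qed
  ultimately show ?thesis using A Sc by (auto simp: sym_pos_def_def wmat_def)
qed

declare svecs.simps [simp del]

locale bayes_cg =
  fixes d :: nat and A Sig :: "real mat" and b x0 :: "real vec"
  assumes A: "A \<in> carrier_mat d d" and invertible_A: "invertible_mat A"
    and b: "b \<in> carrier_vec d" and x0: "x0 \<in> carrier_vec d"
    and Sig: "sym_pos_def d Sig"
begin

abbreviation W :: "real mat" where "W \<equiv> wmat A Sig"
abbreviation r0 :: "real vec" where "r0 \<equiv> b - A *\<^sub>v x0"

text \<open>Indices are shifted by one against the paper: \<open>st i\<close> and \<open>sv i\<close> are its
  \<open>s\<^sub>i\<^sub>+\<^sub>1\<close> before and after normalization, \<open>dirs j\<close> lists the columns of
  \<open>S\<^sub>j\<close>, and \<open>r j\<close> is the residual \<open>r\<^sub>j\<close>.\<close>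

definition st :: "nat \<Rightarrow> real vec" where "st i = stilde d A Sig b x0 (Suc i)"
definition sv :: "nat \<Rightarrow> real vec" where "sv i = normalizeW W (st i)"
definition dirs :: "nat \<Rightarrow> real vec list" where "dirs j = map sv [0..<j]"
definition S :: "nat \<Rightarrow> real mat" where "S j = mat_of_cols d (dirs j)"
definition r :: "nat \<Rightarrow> real vec" where "r j = b - A *\<^sub>v xk d A Sig b x0 (dirs j)"
definition proj :: "nat \<Rightarrow> real vec" where "proj j = S j *\<^sub>v ((S j)\<^sup>T *\<^sub>v r0)"
definition orthonormal_upto :: "nat \<Rightarrow> bool" where
  "orthonormal_upto n \<longleftrightarrow> (\<forall>i<n. \<forall>l<n. sv i \<bullet> (W *\<^sub>v sv l) = (if i = l then 1 else 0))"

lemma W_carrier: "W \<in> carrier_mat d d"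
  and W_sym: "\<And>u v. u \<in> carrier_vec d \<Longrightarrow> v \<in> carrier_vec d \<Longrightarrow> u \<bullet> (W *\<^sub>v v) = v \<bullet> (W *\<^sub>v u)"
  and W_pos: "\<And>v. v \<in> carrier_vec d \<Longrightarrow> v \<noteq> 0\<^sub>v d \<Longrightarrow> v \<bullet> (W *\<^sub>v v) > 0"
  using sym_pos_def_wmat[OF A invertible_A Sig] sym_mat_scalar_prod_swap[of W d]
  unfolding sym_pos_def_def by auto

lemma r0_carrier: "r0 \<in> carrier_vec d"
  using A b x0 by simp

lemma dirs_Suc: "dirs (Suc j) = dirs j @ [sv j]"
  by (simp add: dirs_def)

lemma svecs_eq_dirs: "svecs d A Sig b x0 j = dirs j"
proof (induction j)
  case 0
  show ?case by (simp add: svecs.simps dirs_def)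
next
  case (Suc j)
  then show ?case
    by (cases j) (simp_all add: svecs.simps dirs_Suc sv_def st_def)
qed

lemma st_0: "st 0 = r0"
  by (simp add: st_def)

lemma st_Suc: "st (Suc k) = r (Suc k) - ipW W (sv k) (r (Suc k)) \<cdot>\<^sub>v sv k"
  by (simp add: st_def next_stilde_def Let_def svecs_eq_dirs r_def dirs_Suc)

lemma r_carrier: "r j \<in> carrier_vec d"
  unfolding r_def using A by (intro carrier_vecI) simp

lemma st_carrier: "st k \<in> carrier_vec d"
proof (induction k)
  case 0
  show ?case using r0_carrier by (simp add: st_0)
next
  case (Suc k)
  then show ?case using r_carrier[of "Suc k"] by (simp add: st_Suc sv_def normalizeW_def)
qed

lemma sv_carrier: "sv k \<in> carrier_vec d"
  using st_carrier by (simp add: sv_def normalizeW_def)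

lemma dirs_carrier: "set (dirs j) \<subseteq> carrier_vec d"
  using sv_carrier by (auto simp: dirs_def)

lemma S_carrier: "S j \<in> carrier_mat d j"
  using mat_of_cols_carrier(1)[of d "dirs j"] by (simp add: S_def dirs_def)

lemma proj_carrier: "proj j \<in> carrier_vec d"
  using S_carrier[of j] r0_carrier by (simp add: proj_def)

lemma dim_vec_carriers [simp]:
  "dim_vec (r j) = d" "dim_vec (sv j) = d" "dim_vec (st j) = d" "dim_vec (proj j) = d"
  using r_carrier sv_carrier st_carrier proj_carrier by (auto simp: carrier_vecD)

lemma orthonormal_upto_mono: "orthonormal_upto n \<Longrightarrow> j \<le> n \<Longrightarrow> orthonormal_upto j"
  unfolding orthonormal_upto_def by auto

lemma Lambda_dirs: "orthonormal_upto j \<Longrightarrow> Lambda d A Sig (dirs j) = 1\<^sub>m j"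
  unfolding Lambda_def Smat_def orthonormal_upto_def
  using gram_mat_of_cols_eq_one[OF dirs_carrier W_carrier, of j] by (simp add: dirs_def)

lemma residual_eq:
  assumes "orthonormal_upto j"
  shows "r j = r0 - W *\<^sub>v proj j"
proof -
  have Sc: "Sig \<in> carrier_mat d d" using Sig by (simp add: sym_pos_def_def)
  have S: "S j \<in> carrier_mat d j" by (rule S_carrier)
  have "xk d A Sig b x0 (dirs j) = x0 + (Sig * A\<^sup>T * S j * 1\<^sub>m j * (S j)\<^sup>T) *\<^sub>v r0"
    using Lambda_dirs[OF assms] by (simp add: xk_def minv_one_mat Smat_def S_def)
  also have "(Sig * A\<^sup>T * S j * 1\<^sub>m j * (S j)\<^sup>T) *\<^sub>v r0 = (Sig * A\<^sup>T * S j) *\<^sub>v ((S j)\<^sup>T *\<^sub>v r0)"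
    using Sc A S r0_carrier by (simp add: assoc_mult_mat_vec[of _ d j _ d])
  also have "\<dots> = Sig *\<^sub>v (A\<^sup>T *\<^sub>v proj j)"
    using Sc A S r0_carrier
    by (simp add: proj_def assoc_mult_mat_vec[of _ d d _ j] assoc_mult_mat_vec[of _ d d _ d])
  finally have xk: "xk d A Sig b x0 (dirs j) = x0 + Sig *\<^sub>v (A\<^sup>T *\<^sub>v proj j)" .
  have "A *\<^sub>v (Sig *\<^sub>v (A\<^sup>T *\<^sub>v proj j)) = W *\<^sub>v proj j"
    using A Sc proj_carrier by (simp add: wmat_def assoc_mult_mat_vec[of _ d d _ d])
  then show ?thesis
    unfolding r_def xk using A W_carrier Sc x0 b proj_carrier
    by (intro eq_vecI) (auto simp: mult_add_distrib_mat_vec[OF A])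
qed

lemma residual_0: "r 0 = r0"
proof -
  have "proj 0 = 0\<^sub>v d"
    by (intro eq_vecI) (auto simp: proj_def S_def dirs_def scalar_prod_def)
  then have "r 0 = r0 - W *\<^sub>v 0\<^sub>v d"
    using residual_eq[of 0] by (simp add: orthonormal_upto_def)
  then show ?thesis
    using A W_carrier x0 b by (intro eq_vecI) auto
qed

lemma S_transpose_mult_vec:
  assumes "u \<in> carrier_vec d"
  shows "(S j)\<^sup>T *\<^sub>v u = vec j (\<lambda>l. sv l \<bullet> u)"
proof -
  have "(S j)\<^sup>T *\<^sub>v u = vec j (\<lambda>l. dirs j ! l \<bullet> u)"
    using mat_of_cols_transpose_mult_vec[OF dirs_carrier assms] by (simp add: S_def dirs_def)
  also have "\<dots> = vec j (\<lambda>l. sv l \<bullet> u)"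
    by (intro eq_vecI) (simp_all add: dirs_def)
  finally show ?thesis .
qed

lemma sv_dot_residual:
  assumes o: "orthonormal_upto n" and jn: "j \<le> n" and i: "i < n"
  shows "sv i \<bullet> r j = (if i < j then 0 else sv i \<bullet> r0)"
proof -
  have Wsv: "W *\<^sub>v sv i \<in> carrier_vec d" using W_carrier sv_carrier by simp
  have unit_coeffs: "(S j)\<^sup>T *\<^sub>v (W *\<^sub>v sv i) = unit_vec j i"
    using o jn i by (auto simp: S_transpose_mult_vec[OF Wsv] orthonormal_upto_def unit_vec_def
        intro!: eq_vecI)
  have "sv i \<bullet> (W *\<^sub>v proj j) = (W *\<^sub>v sv i) \<bullet> proj j"
    using W_sym[OF sv_carrier proj_carrier] comm_scalar_prod[OF proj_carrier Wsv] by simp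
  also have "\<dots> = ((S j)\<^sup>T *\<^sub>v (W *\<^sub>v sv i)) \<bullet> ((S j)\<^sup>T *\<^sub>v r0)"
    using transpose_vec_mult_scalar[OF S_carrier _ Wsv, of "(S j)\<^sup>T *\<^sub>v r0"] S_carrier[of j] r0_carrier
    by (simp add: proj_def)
  also have "\<dots> = (if i < j then sv i \<bullet> r0 else 0)"
    by (simp add: unit_coeffs S_transpose_mult_vec[OF r0_carrier] unit_vec_scalar_prod_vec)
  finally show ?thesis
    using residual_eq[OF orthonormal_upto_mono[OF o jn]] sv_carrier r0_carrier W_carrier proj_carrier
    by (simp add: scalar_prod_minus_distrib[of _ d])
qed

lemma residual_diff:
  assumes "orthonormal_upto (Suc j)"
  shows "r j - r (Suc j) = (sv j \<bullet> r0) \<cdot>\<^sub>v (W *\<^sub>v sv j)"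
proof -
  have oj: "orthonormal_upto j" using orthonormal_upto_mono[OF assms] by simp
  have "proj (Suc j) = proj j + (sv j \<bullet> r0) \<cdot>\<^sub>v sv j"
    unfolding proj_def S_def dirs_Suc
    by (rule mat_of_cols_append_mult_transpose[OF dirs_carrier sv_carrier r0_carrier])
  then have "W *\<^sub>v proj (Suc j) = W *\<^sub>v proj j + (sv j \<bullet> r0) \<cdot>\<^sub>v (W *\<^sub>v sv j)"
    using W_carrier proj_carrier sv_carrier
    by (simp add: mult_add_distrib_mat_vec[of _ d d] mult_mat_vec[of _ d d])
  then show ?thesis
    unfolding residual_eq[OF oj] residual_eq[OF assms]
    using W_carrier r0_carrier proj_carrier sv_carrier by (intro eq_vecI) auto
qed

lemma normW_st_pos: "st i \<noteq> 0\<^sub>v d \<Longrightarrow> normW W (st i) > 0"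
  using W_pos[OF st_carrier] by (simp add: normW_def ipW_def)

lemma st_eq_smult_sv: "st i \<noteq> 0\<^sub>v d \<Longrightarrow> st i = normW W (st i) \<cdot>\<^sub>v sv i"
  using normW_st_pos[of i] by (intro eq_vecI) (auto simp: sv_def normalizeW_def)

lemma sv_unit: assumes "st i \<noteq> 0\<^sub>v d" shows "sv i \<bullet> (W *\<^sub>v sv i) = 1"
proof -
  have "sv i \<bullet> (W *\<^sub>v sv i) = (st i \<bullet> (W *\<^sub>v st i)) / (normW W (st i))\<^sup>2"
    using W_carrier st_carrier
    by (simp add: sv_def normalizeW_def mult_mat_vec[of _ d d] power2_eq_square)
  also have "\<dots> = 1"
    using normW_st_pos[OF assms] W_pos[OF st_carrier assms] by (simp add: normW_def ipW_def)
  finally show ?thesis .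
qed

lemma residual_Suc: "r (Suc k) = st (Suc k) + ipW W (sv k) (r (Suc k)) \<cdot>\<^sub>v sv k"
  unfolding st_Suc by (intro eq_vecI) auto

lemma residuals_orthogonal:
  assumes o: "orthonormal_upto n" and j: "j < n" and nz: "\<forall>i<n. st i \<noteq> 0\<^sub>v d"
  shows "r j \<bullet> r n = 0"
proof (cases j)
  case 0
  have "r j = normW W (st 0) \<cdot>\<^sub>v sv 0"
    using st_eq_smult_sv[OF nz[rule_format, OF j]] by (simp add: 0 residual_0 st_0)
  then show ?thesis
    using sv_dot_residual[OF o order.refl, of 0] j 0 sv_carrier r_carrier by simp
next
  case (Suc k)
  define g where "g = ipW W (sv k) (r j)"
  have "r j = normW W (st j) \<cdot>\<^sub>v sv j + g \<cdot>\<^sub>v sv k"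
    using residual_Suc[of k] st_eq_smult_sv[OF nz[rule_format, OF j]] by (simp add: Suc g_def)
  then show ?thesis
    using sv_dot_residual[OF o order.refl, of j] sv_dot_residual[OF o order.refl, of k] j Suc
      sv_carrier r_carrier
    by (simp add: add_scalar_prod_distrib[of _ d])
qed

lemma st_dot_residual:
  assumes "orthonormal_upto n" and "i < n"
  shows "st i \<bullet> r i = r i \<bullet> r i"
proof (cases i)
  case 0
  then show ?thesis by (simp add: st_0 residual_0)
next
  case (Suc k)
  have "sv k \<bullet> r i = 0" using sv_dot_residual[OF assms(1), of i k] assms(2) Suc by simp
  then show ?thesis
    using r_carrier sv_carrier by (simp add: Suc st_Suc minus_scalar_prod_distrib[of _ d])
qed

lemma st_eq_0_if_residual_eq_0:
  assumes "r i = 0\<^sub>v d"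
  shows "st i = 0\<^sub>v d"
proof (cases i)
  case 0
  then show ?thesis using assms by (simp add: st_0 residual_0)
next
  case (Suc k)
  have "W *\<^sub>v 0\<^sub>v d = 0\<^sub>v d"
    using W_carrier by (intro eq_vecI) auto
  then have "ipW W (sv k) (r i) = 0"
    using assms sv_carrier by (simp add: ipW_def)
  then show ?thesis
    using assms sv_carrier by (intro eq_vecI) (auto simp: Suc st_Suc)
qed

lemma sv_dot_r0_nonzero:
  assumes o: "orthonormal_upto n" and i: "i < n" and nz: "st i \<noteq> 0\<^sub>v d"
  shows "sv i \<bullet> r0 \<noteq> 0"
proof
  assume "sv i \<bullet> r0 = 0"
  then have "sv i \<bullet> r i = 0"
    using sv_dot_residual[OF o _ i, of i] i by simp
  then have "st i \<bullet> r i = 0"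
    using sv_carrier r_carrier by (subst st_eq_smult_sv[OF nz]) simp
  then have "r i = 0\<^sub>v d"
    using st_dot_residual[OF o i] scalar_prod_self_eq_0_real[OF r_carrier] by simp
  then show False
    using st_eq_0_if_residual_eq_0 nz by blast
qed

lemma sv_W_residual_orthogonal:
  assumes o: "orthonormal_upto n" and i: "Suc i < n" and nz: "\<forall>i<n. st i \<noteq> 0\<^sub>v d"
  shows "sv i \<bullet> (W *\<^sub>v r n) = 0"
proof -
  have Wsv: "W *\<^sub>v sv i \<in> carrier_vec d" using W_carrier sv_carrier by simp
  have "(sv i \<bullet> r0) * ((W *\<^sub>v sv i) \<bullet> r n) = (r i - r (Suc i)) \<bullet> r n"
    using residual_diff[OF orthonormal_upto_mono[OF o]] i Wsv r_carrier by simp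
  also have "\<dots> = 0"
    using residuals_orthogonal[OF o _ nz, of i] residuals_orthogonal[OF o _ nz, of "Suc i"] i r_carrier
    by (simp add: minus_scalar_prod_distrib[of _ d])
  finally show ?thesis
    using sv_dot_r0_nonzero[OF o _] nz i W_sym[OF sv_carrier r_carrier]
      comm_scalar_prod[OF Wsv r_carrier] by auto
qed

lemma orthonormal_upto_Suc:
  assumes o: "orthonormal_upto n" and nz: "\<forall>i<Suc n. st i \<noteq> 0\<^sub>v d"
  shows "orthonormal_upto (Suc n)"
proof -
  have new: "sv i \<bullet> (W *\<^sub>v sv n) = (if i = n then 1 else 0)" if i: "i < Suc n" for i
  proof (cases "i = n")
    case True
    then show ?thesis using sv_unit nz by simp
  next
    case False
    then obtain k where n: "n = Suc k" and ik: "i \<le> k" using i by (cases n) auto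
    define g where "g = ipW W (sv k) (r n)"
    have "sv i \<bullet> (W *\<^sub>v st n) = sv i \<bullet> (W *\<^sub>v r n) - g * (sv i \<bullet> (W *\<^sub>v sv k))"
      using W_carrier r_carrier sv_carrier
      by (simp add: n st_Suc g_def mult_minus_distrib_mat_vec[of _ d d] mult_mat_vec[of _ d d]
          scalar_prod_minus_distrib[of _ d])
    also have "\<dots> = 0"
    proof (cases "i = k")
      case True
      then show ?thesis using o n by (simp add: g_def ipW_def orthonormal_upto_def)
    next
      case False
      then show ?thesis
        using sv_W_residual_orthogonal[of n i] o nz ik n by (simp add: orthonormal_upto_def)
    qed
    finally show ?thesis
      using False W_carrier st_carrier sv_carrier
      by (simp add: sv_def[of n] normalizeW_def mult_mat_vec[of _ d d])
  qed
  show ?thesis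
    unfolding orthonormal_upto_def
  proof (intro allI impI)
    fix i l assume i: "i < Suc n" and l: "l < Suc n"
    consider "i < n" "l < n" | "l = n" | "i = n" using i l by linarith
    then show "sv i \<bullet> (W *\<^sub>v sv l) = (if i = l then 1 else 0)"
    proof cases
      case 1
      then show ?thesis using o by (simp add: orthonormal_upto_def)
    next
      case 2
      then show ?thesis using new i by simp
    next
      case 3
      then show ?thesis using new[OF l] W_sym[OF sv_carrier sv_carrier, of i l] by auto
    qed
  qed
qed

lemma orthonormal_upto_if_nonzero:
  assumes "\<forall>i<m. st i \<noteq> 0\<^sub>v d" and "n \<le> m"
  shows "orthonormal_upto n"
  using assms(2)
proof (induction n)
  case 0
  then show ?case by (simp add: orthonormal_upto_def)
next
  case (Suc n)
  then show ?case using orthonormal_upto_Suc assms(1) by simp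
qed

end

theorem proposition7:
  fixes d m :: nat and A Sig :: "real mat" and b x0 :: "real vec"
  assumes "A \<in> carrier_mat d d" and "invertible_mat A"
    and "b \<in> carrier_vec d" and "x0 \<in> carrier_vec d"
    and "sym_pos_def d Sig"
    and "\<forall>i \<in> {1..m}. stilde d A Sig b x0 i \<noteq> 0\<^sub>v d"
  shows "(\<forall>i \<in> {1..m}. \<forall>j \<in> {1..m}.
            ipW (wmat A Sig) (svec d A Sig b x0 i) (svec d A Sig b x0 j) = (if i = j then 1 else 0))
         \<and> Lambda d A Sig (svecs d A Sig b x0 m) = 1\<^sub>m m"
proof -
  interpret bayes_cg d A Sig b x0
    using assms by unfold_locales
  have "\<forall>i<m. st i \<noteq> 0\<^sub>v d"
    using assms(6) by (auto simp: st_def)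
  then have orth: "orthonormal_upto m"
    using orthonormal_upto_if_nonzero by blast
  have svec: "svec d A Sig b x0 (Suc k) = sv k" for k
    by (simp add: svec_def svecs_eq_dirs dirs_Suc)
  have "ipW W (svec d A Sig b x0 i) (svec d A Sig b x0 j) = (if i = j then 1 else 0)"
    if "i \<in> {1..m}" "j \<in> {1..m}" for i j
    using that orth by (cases i; cases j) (auto simp: svec ipW_def orthonormal_upto_def)
  then show ?thesis
    using Lambda_dirs[OF orth] by (simp add: svecs_eq_dirs)
qed

end
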